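(* Suppose $S\subseteq\mathbb{N}^{\mathbb{N}}$ is defined by a sentence $\forall x\,\exists y\,\phi$ of $\mathscr{L}_{\max}$, where $\phi$ is quantifier-free. If $S$ is countable, then $S$ is guessable.
   Context: A function $G:\mathbb{N}^{<\mathbb{N}}\to\{0,1\}$ ($\mathbb{N}^{<\mathbb{N}}$ = finite sequences of naturals) is a guesser for $S\subseteq\mathbb{N}^{\mathbb{N}}$ if for every $f:\mathbb{N}\to\mathbb{N}$ there is $m>0$ such that for all $n>m$, $G(f(0),\ldots,f(n))$ equals $1$ if $f\in S$ and $0$ if $f\notin S$; $S$ is guessable if it has a guesser. The language $\mathscr{L}_{\max}$ is a first-order language extended with ellipses: constant symbols $\mathbf{n}$ (also $\bar n$) for each $n\in\mathbb{N}$; an $n$-ary function symbol $\tilde w$ for each $w:\mathbb{N}^n\to\mathbb{N}$ ($n>0$); an $n$-ary predicate symbol $\tilde p$ for each $p\subseteq\mathbb{N}^n$ ($n>0$); an $\mathbb{N}^{<\mathbb{N}}$-ary function symbol $\tilde G$ for each $G:\mathbb{N}^{<\mathbb{N}}\to\mathbb{N}$ (applicable to any finite number of arguments); a unary function symbol $\mathbf{f}$; and a symbol $\cdots_x$ for each variable $x$. Besides the usual terms, for $\mathbb{N}^{<\mathbb{N}}$-ary $G$, terms $u,v$ and variable $x$, $G(u(\mathbf{0}),\cdots_x,u(v))$ is a term with free variables $(FV(u)\setminus\{x\})\cup FV(v)$. Formulas are built as usual. For $f:\mathbb{N}\to\mathbb{N}$, $\mathscr{M}_f$ is the structure on $\mathbb{N}$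 interpreting every symbol as the object it names and $\mathbf{f}$ as $f$; terms are evaluated as usual, plus $G(u(\mathbf{0}),\cdots_x,u(v))^{s}=G\big(u(x|\mathbf{0})^{s},\ldots,u(x|\overline{v^{s}})^{s}\big)$ under an assignment $s$, where $u(x|c)$ is substitution of the constant $c$ for $x$ in $u$. A sentence $\phi$ defines $S\subseteq\mathbb{N}^{\mathbb{N}}$ if for every $f:\mathbb{N}\to\mathbb{N}$, $\mathscr{M}_f\models\phi$ iff $f\in S$. *)

theory Defs
  imports "HOL-Library.Countable_Set"
begin

text \<open>A guesser is a map from finite sequences to {0,1}; we use bool (True = 1, False = 0).
  G guesses S if for every f there is m>0 such that for all n>m,
  G(f(0),...,f(n)) = 1 iff f is in S.\<close>

definition guesser :: "(nat list \<Rightarrow> bool) \<Rightarrow> (nat \<Rightarrow> nat) set \<Rightarrow> bool" where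
  "guesser G S \<longleftrightarrow>
     (\<forall>f. \<exists>m>0. \<forall>n>m. G (map f [0..<Suc n]) = (f \<in> S))"

definition guessable :: "(nat \<Rightarrow> nat) set \<Rightarrow> bool" where
  "guessable S \<longleftrightarrow> (\<exists>G. guesser G S)"

text \<open>Const n      : constant symbol for n
  Fn n w ts    : n-ary function symbol for w : N^n -> N (N^n encoded as lists of length n)
  GFn G ts     : N^<N-ary function symbol for G applied to finitely many arguments
  Fsym t       : the unary function symbol f
  Ell G u x v  : the ellipsis term G(u(0), ..._x, u(v))\<close>

datatype trm =
    Var nat
  | Const nat
  | Fn nat "nat list \<Rightarrow> nat" "trm list"
  | GFn "nat list \<Rightarrow> nat" "trm list"
  | Fsym trm
  | Ell "nat list \<Rightarrow> nat" trm nat trm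

datatype fm =
    FFalse
  | Eq trm trm
  | Pred nat "nat list set" "trm list"
  | Neg fm
  | Conj fm fm
  | Disj fm fm
  | Imp fm fm
  | Iff fm fm
  | All nat fm
  | Ex nat fm

fun wf_trm :: "trm \<Rightarrow> bool" where
  "wf_trm (Var x) = True"
| "wf_trm (Const n) = True"
| "wf_trm (Fn n w ts) = (n > 0 \<and> length ts = n \<and> (\<forall>t\<in>set ts. wf_trm t))"
| "wf_trm (GFn G ts) = (\<forall>t\<in>set ts. wf_trm t)"
| "wf_trm (Fsym t) = wf_trm t"
| "wf_trm (Ell G u x v) = (wf_trm u \<and> wf_trm v)"

fun wf_fm :: "fm \<Rightarrow> bool" where
  "wf_fm FFalse = True"
| "wf_fm (Eq t1 t2) = (wf_trm t1 \<and> wf_trm t2)"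
| "wf_fm (Pred n p ts) = (n > 0 \<and> length ts = n \<and> p \<subseteq> {l. length l = n} \<and> (\<forall>t\<in>set ts. wf_trm t))"
| "wf_fm (Neg a) = wf_fm a"
| "wf_fm (Conj a b) = (wf_fm a \<and> wf_fm b)"
| "wf_fm (Disj a b) = (wf_fm a \<and> wf_fm b)"
| "wf_fm (Imp a b) = (wf_fm a \<and> wf_fm b)"
| "wf_fm (Iff a b) = (wf_fm a \<and> wf_fm b)"
| "wf_fm (All x a) = wf_fm a"
| "wf_fm (Ex x a) = wf_fm a"

fun FV_trm :: "trm \<Rightarrow> nat set" where
  "FV_trm (Var x) = {x}"
| "FV_trm (Const n) = {}"
| "FV_trm (Fn n w ts) = (\<Union>t\<in>set ts. FV_trm t)"
| "FV_trm (GFn G ts) = (\<Union>t\<in>set ts. FV_trm t)"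
| "FV_trm (Fsym t) = FV_trm t"
| "FV_trm (Ell G u x v) = (FV_trm u - {x}) \<union> FV_trm v"

fun FV_fm :: "fm \<Rightarrow> nat set" where
  "FV_fm FFalse = {}"
| "FV_fm (Eq t1 t2) = FV_trm t1 \<union> FV_trm t2"
| "FV_fm (Pred n p ts) = (\<Union>t\<in>set ts. FV_trm t)"
| "FV_fm (Neg a) = FV_fm a"
| "FV_fm (Conj a b) = FV_fm a \<union> FV_fm b"
| "FV_fm (Disj a b) = FV_fm a \<union> FV_fm b"
| "FV_fm (Imp a b) = FV_fm a \<union> FV_fm b"
| "FV_fm (Iff a b) = FV_fm a \<union> FV_fm b"
| "FV_fm (All x a) = FV_fm a - {x}"
| "FV_fm (Ex x a) = FV_fm a - {x}"

fun qfree :: "fm \<Rightarrow> bool" where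
  "qfree (All x a) = False"
| "qfree (Ex x a) = False"
| "qfree (Neg a) = qfree a"
| "qfree (Conj a b) = (qfree a \<and> qfree b)"
| "qfree (Disj a b) = (qfree a \<and> qfree b)"
| "qfree (Imp a b) = (qfree a \<and> qfree b)"
| "qfree (Iff a b) = (qfree a \<and> qfree b)"
| "qfree _ = True"

text \<open>For the ellipsis term,
  the value of u(x|c) under s equals the value of u under s(x := c)
  (substitution of a constant for the free occurrences of x).\<close>

fun eval :: "(nat \<Rightarrow> nat) \<Rightarrow> (nat \<Rightarrow> nat) \<Rightarrow> trm \<Rightarrow> nat" where
  "eval f s (Var x) = s x"
| "eval f s (Const n) = n"
| "eval f s (Fn n w ts) = w (map (eval f s) ts)"
| "eval f s (GFn G ts) = G (map (eval f s) ts)"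
| "eval f s (Fsym t) = f (eval f s t)"
| "eval f s (Ell G u x v) =
     G (map (\<lambda>c. eval f (s(x := c)) u) [0..<Suc (eval f s v)])"

fun sat :: "(nat \<Rightarrow> nat) \<Rightarrow> (nat \<Rightarrow> nat) \<Rightarrow> fm \<Rightarrow> bool" where
  "sat f s FFalse = False"
| "sat f s (Eq t1 t2) = (eval f s t1 = eval f s t2)"
| "sat f s (Pred n p ts) = (map (eval f s) ts \<in> p)"
| "sat f s (Neg a) = (\<not> sat f s a)"
| "sat f s (Conj a b) = (sat f s a \<and> sat f s b)"
| "sat f s (Disj a b) = (sat f s a \<or> sat f s b)"
| "sat f s (Imp a b) = (sat f s a \<longrightarrow> sat f s b)"
| "sat f s (Iff a b) = (sat f s a \<longleftrightarrow> sat f s b)"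
| "sat f s (All x a) = (\<forall>c. sat f (s(x := c)) a)"
| "sat f s (Ex x a) = (\<exists>c. sat f (s(x := c)) a)"

definition models :: "(nat \<Rightarrow> nat) \<Rightarrow> fm \<Rightarrow> bool" where
  "models f \<phi> \<longleftrightarrow> (\<forall>s. sat f s \<phi>)"

definition sentence :: "fm \<Rightarrow> bool" where
  "sentence \<phi> \<longleftrightarrow> wf_fm \<phi> \<and> FV_fm \<phi> = {}"

definition defines_set :: "fm \<Rightarrow> (nat \<Rightarrow> nat) set \<Rightarrow> bool" where
  "defines_set \<phi> S \<longleftrightarrow> sentence \<phi> \<and> (\<forall>f. models f \<phi> \<longleftrightarrow> f \<in> S)"

end

theory Submission
  imports Defs
begin

text \<open>The truth of a quantifier-free formula at \<open>f\<close> depends only on a finite prefix of \<open>f\<close>.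
  Enumerate \<open>S\<close> as \<open>g\<^sub>0, g\<^sub>1, \<dots>\<close> and accept a finite sequence \<open>\<sigma>\<close> iff it is a prefix of some
  \<open>g\<^sub>i\<close> such that for every \<open>a \<le> i\<close> some witness \<open>b\<close> for \<open>\<phi>(a, b)\<close> is already forced by \<open>\<sigma>\<close>.
  If \<open>f = g\<^sub>i\<close> lies in \<open>S\<close>, the finitely many witnesses for \<open>a \<le> i\<close> are eventually forced by
  the prefixes of \<open>f\<close>. If \<open>f \<notin> S\<close> because \<open>\<phi>(a, b)\<close> fails for all \<open>b\<close>, then the prefixes of \<open>f\<close>
  eventually differ from those of \<open>g\<^sub>0, \<dots>, g\<^bsub>a-1\<^esub>\<close>, and a witness for \<open>a\<close> forced by a
  common prefix of \<open>f\<close> and some \<open>g\<^sub>i\<close> with \<open>i \<ge> a\<close> would work for \<open>f\<close> itself.\<close>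

text \<open>Continuity at \<open>f\<close> from Baire space into a discrete space.\<close>

definition prefix_determined :: "((nat \<Rightarrow> nat) \<Rightarrow> 'a) \<Rightarrow> (nat \<Rightarrow> nat) \<Rightarrow> bool" where
  "prefix_determined F f \<longleftrightarrow> (\<exists>N. \<forall>h. (\<forall>k<N. h k = f k) \<longrightarrow> F h = F f)"

lemma prefix_determined_const: "prefix_determined (\<lambda>h. c) f"
  unfolding prefix_determined_def by simp

lemma prefix_determined_apply: "prefix_determined (\<lambda>h. h c) f"
  unfolding prefix_determined_def by (rule exI[of _ "Suc c"]) simp

lemma prefix_determined_comp:
  "prefix_determined F f \<Longrightarrow> prefix_determined (\<lambda>h. w (F h)) f"
  unfolding prefix_determined_def by (metis (no_types, lifting))

lemma prefix_determined_binop: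
  assumes "prefix_determined F f" and "prefix_determined G f"
  shows "prefix_determined (\<lambda>h. op (F h) (G h)) f"
proof -
  obtain N1 where N1: "\<And>h. \<forall>k<N1. h k = f k \<Longrightarrow> F h = F f"
    using assms(1) unfolding prefix_determined_def by blast
  obtain N2 where N2: "\<And>h. \<forall>k<N2. h k = f k \<Longrightarrow> G h = G f"
    using assms(2) unfolding prefix_determined_def by blast
  have "op (F h) (G h) = op (F f) (G f)" if "\<forall>k<max N1 N2. h k = f k" for h
    using N1[of h] N2[of h] that by simp
  then show ?thesis
    unfolding prefix_determined_def by blast
qed

lemma prefix_determined_map:
  "(\<And>t. t \<in> set ts \<Longrightarrow> prefix_determined (F t) f)
    \<Longrightarrow> prefix_determined (\<lambda>h. map (\<lambda>t. F t h) ts) f"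
  by (induction ts) (auto intro: prefix_determined_const prefix_determined_binop[where op = Cons])

text \<open>This handles \<open>f(t)\<close> and the ellipsis term, whose length depends on a
  term's value.\<close>

lemma prefix_determined_dependent:
  assumes "prefix_determined F f" and "prefix_determined (K (F f)) f"
  shows "prefix_determined (\<lambda>h. K (F h) h) f"
proof -
  obtain N1 where N1: "\<And>h. \<forall>k<N1. h k = f k \<Longrightarrow> F h = F f"
    using assms(1) unfolding prefix_determined_def by blast
  obtain N2 where N2: "\<And>h. \<forall>k<N2. h k = f k \<Longrightarrow> K (F f) h = K (F f) f"
    using assms(2) unfolding prefix_determined_def by blast
  have "K (F h) h = K (F f) f" if "\<forall>k<max N1 N2. h k = f k" for h
    using N1[of h] N2[of h] that by simp
  then show ?thesis
    unfolding prefix_determined_def by blast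
qed

lemma eval_prefix_determined: "prefix_determined (\<lambda>h. eval h s t) f"
proof (induction t arbitrary: s)
  case (Fn n w ts)
  show ?case
    unfolding eval.simps
    by (rule prefix_determined_comp[OF prefix_determined_map]) (rule Fn.IH)
next
  case (GFn G ts)
  show ?case
    unfolding eval.simps
    by (rule prefix_determined_comp[OF prefix_determined_map]) (rule GFn.IH)
next
  case (Fsym t)
  then show ?case
    using prefix_determined_dependent[where K = "\<lambda>c h. h c"] prefix_determined_apply by simp
next
  case (Ell G u x v)
  have "prefix_determined (\<lambda>h. G (map (\<lambda>c. eval h (s(x := c)) u) [0..<Suc d])) f" for d
    by (rule prefix_determined_comp[OF prefix_determined_map]) (rule Ell.IH(1))
  then show ?case
    using prefix_determined_dependent[OF Ell.IH(2),
        where K = "\<lambda>d h. G (map (\<lambda>c. eval h (s(x := c)) u) [0..<Suc d])"] by simp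
qed (simp_all add: prefix_determined_const)

lemma sat_prefix_determined: "qfree \<phi> \<Longrightarrow> prefix_determined (\<lambda>h. sat h s \<phi>) f"
proof (induction \<phi>)
  case (Eq t1 t2)
  show ?case
    unfolding sat.simps
    by (rule prefix_determined_binop[OF eval_prefix_determined eval_prefix_determined])
next
  case (Pred n p ts)
  show ?case
    unfolding sat.simps
    by (rule prefix_determined_comp[OF prefix_determined_map]) (rule eval_prefix_determined)
qed (auto intro: prefix_determined_const prefix_determined_comp prefix_determined_binop)

lemma eval_FV_cong: "\<forall>v\<in>FV_trm t. s v = s' v \<Longrightarrow> eval f s t = eval f s' t"
proof (induction t arbitrary: s s')
  case (Fn n w ts)
  then have "map (eval f s) ts = map (eval f s') ts"
    by (auto intro!: map_cong)
  then show ?case by (simp only: eval.simps)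
next
  case (GFn G ts)
  then have "map (eval f s) ts = map (eval f s') ts"
    by (auto intro!: map_cong)
  then show ?case by (simp only: eval.simps)
next
  case (Ell G u x v)
  then have "eval f s v = eval f s' v" and "\<And>c. eval f (s(x := c)) u = eval f (s'(x := c)) u"
    by auto
  then show ?case by simp
next
  case (Fsym t)
  then have "eval f s t = eval f s' t" by simp
  then show ?case by simp
qed simp_all

lemma sat_FV_cong: "\<forall>v\<in>FV_fm \<phi>. s v = s' v \<Longrightarrow> sat f s \<phi> = sat f s' \<phi>"
proof (induction \<phi> arbitrary: s s')
  case (Eq t1 t2)
  then show ?case using eval_FV_cong[of t1 s s' f] eval_FV_cong[of t2 s s' f] by auto
next
  case (Pred n p ts)
  then have "map (eval f s) ts = map (eval f s') ts"
    by (auto intro!: map_cong eval_FV_cong)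
  then show ?case by (simp only: sat.simps)
next
  case (All x a)
  then have "\<And>c. sat f (s(x := c)) a = sat f (s'(x := c)) a" by auto
  then show ?case by simp
next
  case (Ex x a)
  then have "\<And>c. sat f (s(x := c)) a = sat f (s'(x := c)) a" by auto
  then show ?case by simp
qed (simp_all, (metis Un_iff)+)

definition forced_witness ::
    "('a \<Rightarrow> 'b \<Rightarrow> (nat \<Rightarrow> nat) \<Rightarrow> bool) \<Rightarrow> (nat \<Rightarrow> nat) \<Rightarrow> nat \<Rightarrow> 'a \<Rightarrow> bool" where
  "forced_witness P f n a \<longleftrightarrow> (\<exists>b. \<forall>h. (\<forall>k<n. h k = f k) \<longrightarrow> P a b h)"

definition enumeration_guesser ::
    "(nat \<Rightarrow> 'b \<Rightarrow> (nat \<Rightarrow> nat) \<Rightarrow> bool) \<Rightarrow> (nat \<Rightarrow> nat \<Rightarrow> nat) \<Rightarrow> nat list \<Rightarrow> bool" where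
  "enumeration_guesser P g \<sigma> \<longleftrightarrow>
     (\<exists>i. map (g i) [0..<length \<sigma>] = \<sigma> \<and> (\<forall>a\<le>i. forced_witness P (g i) (length \<sigma>) a))"

lemma forced_witness_eventually:
  assumes "prefix_determined (P a b) f" and "P a b f"
  shows "eventually (\<lambda>n. forced_witness P f n a) sequentially"
proof -
  obtain N where N: "\<And>h. \<forall>k<N. h k = f k \<Longrightarrow> P a b h = P a b f"
    using assms(1) unfolding prefix_determined_def by blast
  show ?thesis
  proof (rule eventually_sequentiallyI[of N])
    fix n assume "N \<le> n"
    then have "\<forall>h. (\<forall>k<n. h k = f k) \<longrightarrow> P a b h"
      using N assms(2) by auto
    then show "forced_witness P f n a"
      unfolding forced_witness_def by blast
  qed
qed

lemma prefixes_eventually_differ: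
  assumes "g \<noteq> f"
  shows "eventually (\<lambda>n. map g [0..<n] \<noteq> map f [0..<n]) sequentially"
proof -
  obtain k where k: "g k \<noteq> f k"
    using assms by blast
  show ?thesis
  proof (rule eventually_sequentiallyI[of "Suc k"])
    fix n assume "Suc k \<le> n"
    then have "map g [0..<n] ! k \<noteq> map f [0..<n] ! k"
      using k by simp
    then show "map g [0..<n] \<noteq> map f [0..<n]"
      by metis
  qed
qed

lemma enumeration_guesser_eventually_accepts:
  assumes "\<And>a b. prefix_determined (P a b) (g i)" and "\<forall>a. \<exists>b. P a b (g i)"
  shows "eventually (\<lambda>n. enumeration_guesser P g (map (g i) [0..<n])) sequentially"
proof -
  have "eventually (\<lambda>n. forced_witness P (g i) n a) sequentially" for a
  proof -
    obtain b where "P a b (g i)"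
      using assms(2) by blast
    then show ?thesis
      by (rule forced_witness_eventually[OF assms(1)])
  qed
  then have "eventually (\<lambda>n. \<forall>a\<in>{..i}. forced_witness P (g i) n a) sequentially"
    by (intro eventually_ball_finite) auto
  then show ?thesis
    unfolding enumeration_guesser_def by (rule eventually_mono) auto
qed

lemma enumeration_guesser_eventually_rejects:
  assumes "f \<notin> range g" and "\<And>b. \<not> P a b f"
  shows "eventually (\<lambda>n. \<not> enumeration_guesser P g (map f [0..<n])) sequentially"
proof -
  have "eventually (\<lambda>n. \<forall>i\<in>{..<a}. map (g i) [0..<n] \<noteq> map f [0..<n]) sequentially"
    using assms(1) by (intro eventually_ball_finite finite_lessThan ballI prefixes_eventually_differ) auto
  then show ?thesis
  proof (rule eventually_mono)
    fix n assume differ: "\<forall>i\<in>{..<a}. map (g i) [0..<n] \<noteq> map f [0..<n]"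
    show "\<not> enumeration_guesser P g (map f [0..<n])"
    proof
      assume "enumeration_guesser P g (map f [0..<n])"
      then obtain i where agree: "map (g i) [0..<n] = map f [0..<n]"
        and forced: "\<forall>a'\<le>i. forced_witness P (g i) n a'"
        unfolding enumeration_guesser_def by auto
      have "a \<le> i"
        using differ agree by (meson lessThan_iff not_le)
      then obtain b where "\<forall>h. (\<forall>k<n. h k = g i k) \<longrightarrow> P a b h"
        using forced unfolding forced_witness_def by blast
      moreover have "\<forall>k<n. f k = g i k"
        using agree by (simp add: map_eq_conv)
      ultimately show False
        using assms(2) by blast
    qed
  qed
qed

lemma guesserI:
  assumes "\<And>f. eventually (\<lambda>n. G (map f [0..<n]) = (f \<in> S)) sequentially"
  shows "guesser G S"
  unfolding guesser_def
proof
  fix f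
  obtain N where "\<forall>n\<ge>N. G (map f [0..<n]) = (f \<in> S)"
    using assms[of f] unfolding eventually_sequentially by blast
  then show "\<exists>m>0. \<forall>n>m. G (map f [0..<Suc n]) = (f \<in> S)"
    by (intro exI[of _ "Suc N"]) (auto simp del: upt_Suc)
qed

lemma guessable_countable_forall_exists:
  fixes P :: "nat \<Rightarrow> 'b \<Rightarrow> (nat \<Rightarrow> nat) \<Rightarrow> bool"
  assumes "countable S"
    and "\<And>a b f. prefix_determined (P a b) f"
    and "\<And>f. f \<in> S \<longleftrightarrow> (\<forall>a. \<exists>b. P a b f)"
  shows "guessable S"
proof (cases "S = {}")
  case True
  then have "guesser (\<lambda>_. False) S"
    by (intro guesserI) simp
  then show ?thesis
    unfolding guessable_def by blast
next
  case False
  define g where "g = from_nat_into S"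
  have range_g: "range g = S"
    using range_from_nat_into[OF False assms(1)] by (simp add: g_def)
  have "guesser (enumeration_guesser P g) S"
  proof (rule guesserI)
    fix f
    show "eventually (\<lambda>n. enumeration_guesser P g (map f [0..<n]) = (f \<in> S)) sequentially"
    proof (cases "f \<in> S")
      case True
      then obtain i where "f = g i"
        using range_g by blast
      then show ?thesis
        using True assms enumeration_guesser_eventually_accepts[of P g i] by simp
    next
      case False
      then obtain a where "\<And>b. \<not> P a b f"
        using assms(3) by blast
      then show ?thesis
        using False range_g enumeration_guesser_eventually_rejects[of f g P a] by simp
    qed
  qed
  then show ?thesis
    unfolding guessable_def by blast
qed

theorem lemma4p8:
  fixes S :: "(nat \<Rightarrow> nat) set" and x y :: nat and \<phi> :: fm
  assumes "qfree \<phi>"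
    and "defines_set (All x (Ex y \<phi>)) S"
    and "countable S"
  shows "guessable S"
proof (rule guessable_countable_forall_exists[OF assms(3)])
  define s0 :: "nat \<Rightarrow> nat" where "s0 = (\<lambda>_. 0)"
  show "prefix_determined (\<lambda>h. sat h (s0(x := a, y := b)) \<phi>) f" for a b f
    using assms(1) by (rule sat_prefix_determined)
  have FV: "FV_fm \<phi> \<subseteq> {x, y}"
    using assms(2) unfolding defines_set_def sentence_def by auto
  have agree: "sat f (s(x := a, y := b)) \<phi> = sat f (s0(x := a, y := b)) \<phi>" for f s a b
    using FV by (intro sat_FV_cong) auto
  have "models f (All x (Ex y \<phi>)) \<longleftrightarrow> (\<forall>a. \<exists>b. sat f (s0(x := a, y := b)) \<phi>)" for f
    unfolding models_def sat.simps using agree by metis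
  then show "f \<in> S \<longleftrightarrow> (\<forall>a. \<exists>b. sat f (s0(x := a, y := b)) \<phi>)" for f
    using assms(2) unfolding defines_set_def by blast
qed

end
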